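(* For any simple undirected graph $G$, $$n_G(\mathcal{C}_4)=\frac14\sum_{st\in E}\sum_{u\in\Gamma(t)\setminus\{s\}}\big(|c(s,u)|-1\big),$$ where in the outer sum each edge $\{s,t\}$ appears once, with its endpoints named $s$ and $t$ in an arbitrary fixed way.
   Context: $\Gamma(x)$ is the neighbourhood of $x$ and $c(s,u)=\Gamma(s)\cap\Gamma(u)$. $\mathcal{C}_4$ is the cycle on 4 vertices and $n_G(\mathcal{C}_4)$ the number of subgraphs of $G$ isomorphic to it. *)

theory Defs
  imports Complex_Main
begin

definition simple_graph :: "'a set \<Rightarrow> 'a set set \<Rightarrow> bool" where
  "simple_graph V E \<longleftrightarrow> finite V \<and> (\<forall>e\<in>E. \<exists>x y. x \<noteq> y \<and> x \<in> V \<and> y \<in> V \<and> e = {x, y})"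

definition nbhd :: "'a set \<Rightarrow> 'a set set \<Rightarrow> 'a \<Rightarrow> 'a set" where
  "nbhd V E x = {y \<in> V. {x, y} \<in> E}"

definition common_nbhd :: "'a set \<Rightarrow> 'a set set \<Rightarrow> 'a \<Rightarrow> 'a \<Rightarrow> 'a set" where
  "common_nbhd V E s u = nbhd V E s \<inter> nbhd V E u"

definition C4_subgraphs :: "'a set \<Rightarrow> 'a set set \<Rightarrow> ('a set \<times> 'a set set) set" where
  "C4_subgraphs V E = {(V', E'). V' \<subseteq> V \<and> E' \<subseteq> E \<and>
     (\<exists>a b c d. distinct [a, b, c, d] \<and> V' = {a, b, c, d} \<and>
        E' = {{a, b}, {b, c}, {c, d}, {d, a}})}"

definition n_C4 :: "'a set \<Rightarrow> 'a set set \<Rightarrow> nat" where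
  "n_C4 V E = card (C4_subgraphs V E)"

end

theory Submission
  imports Defs
begin

text \<open>Count the 4-tuples \<open>(a, b, c, d)\<close> of distinct vertices with \<open>ab, bc, cd, da \<in> E\<close>.
  Every \<open>C\<^sub>4\<close>-subgraph arises from exactly 8 of them, one for each symmetry of the square.
  Reversal \<open>(a, b, c, d) \<mapsto> (b, a, d, c)\<close> is an involution on these tuples which exchanges
  \<open>(a, b) \<in> D\<close> and \<open>(b, a) \<in> D\<close>, and \<open>D\<close> contains exactly one orientation of every edge,
  so \<open>4 n\<^sub>G(C\<^sub>4)\<close> tuples start with a pair \<open>(s, t) \<in> D\<close>. Given \<open>(s, t)\<close>, such a tuple is a
  choice of \<open>u \<in> \<Gamma>(t) - {s}\<close> followed by \<open>w \<in> c(s, u) - {t}\<close>, and \<open>t \<in> c(s, u)\<close>.\<close>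

lemma card_eq_mult_card_image_if_uniform_fibres:
  assumes "finite A" and "\<And>y. y \<in> f ` A \<Longrightarrow> card {x \<in> A. f x = y} = k"
  shows "card A = k * card (f ` A)"
proof -
  have "card A = card (\<Union>y\<in>f ` A. {x \<in> A. f x = y})"
    by (rule arg_cong[where f = card]) blast
  also have "\<dots> = (\<Sum>y\<in>f ` A. card {x \<in> A. f x = y})"
    using \<open>finite A\<close> by (intro card_UN_disjoint) auto
  also have "\<dots> = k * card (f ` A)"
    using assms(2) by simp
  finally show ?thesis .
qed

lemma card_eq_twice_card_if_involution_flips:
  assumes "finite A"
    and "\<And>x. x \<in> A \<Longrightarrow> f x \<in> A" "\<And>x. x \<in> A \<Longrightarrow> f (f x) = x"
    and "\<And>x. x \<in> A \<Longrightarrow> P (f x) \<longleftrightarrow> \<not> P x"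
  shows "card A = 2 * card {x \<in> A. P x}"
proof -
  have "{x \<in> A. \<not> P x} = f ` {x \<in> A. P x}"
  proof (intro equalityI subsetI)
    fix x
    assume "x \<in> {x \<in> A. \<not> P x}"
    then have "f x \<in> {x \<in> A. P x}" and "x = f (f x)"
      using assms(2-4) by auto
    then show "x \<in> f ` {x \<in> A. P x}"
      by blast
  qed (use assms(2,4) in auto)
  moreover have "inj_on f {x \<in> A. P x}"
    using assms(3) by (metis (mono_tags, lifting) inj_onI mem_Collect_eq)
  ultimately have flipped: "card {x \<in> A. \<not> P x} = card {x \<in> A. P x}"
    by (simp add: card_image)
  have "card A = card ({x \<in> A. P x} \<union> {x \<in> A. \<not> P x})"
    by (rule arg_cong[where f = card]) blast
  also have "\<dots> = card {x \<in> A. P x} + card {x \<in> A. \<not> P x}"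
    using \<open>finite A\<close> by (intro card_Un_disjoint) auto
  finally show ?thesis
    using flipped by simp
qed

lemma mem_C4_edges:
  assumes "{x, y} \<in> {{a, b}, {b, c}, {c, d}, {d, a}}"
  shows "x = a \<and> (y = b \<or> y = d) \<or> x = b \<and> (y = a \<or> y = c) \<or>
         x = c \<and> (y = b \<or> y = d) \<or> x = d \<and> (y = c \<or> y = a)"
  using assms unfolding insert_iff empty_iff doubleton_eq_iff by blast

lemma C4_edges_determine_cycle_up_to_symmetry:
  assumes "distinct [a, b, c, d]" "distinct [s, t, u, w]"
    and "{{s, t}, {t, u}, {u, w}, {w, s}} = {{a, b}, {b, c}, {c, d}, {d, a}}"
  shows "((s, t), (u, w)) \<in> {((a, b), (c, d)), ((b, c), (d, a)), ((c, d), (a, b)), ((d, a), (b, c)),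
           ((a, d), (c, b)), ((d, c), (b, a)), ((c, b), (a, d)), ((b, a), (d, c))}"
proof -
  have "{s, t} \<in> {{a, b}, {b, c}, {c, d}, {d, a}}" "{t, u} \<in> {{a, b}, {b, c}, {c, d}, {d, a}}"
    "{u, w} \<in> {{a, b}, {b, c}, {c, d}, {d, a}}"
    unfolding assms(3)[symmetric] by simp_all
  note st = mem_C4_edges[OF this(1)] and tu = mem_C4_edges[OF this(2)]
    and uw = mem_C4_edges[OF this(3)]
  have neq: "a \<noteq> b" "a \<noteq> c" "a \<noteq> d" "b \<noteq> c" "b \<noteq> d" "c \<noteq> d"
    "s \<noteq> t" "s \<noteq> u" "s \<noteq> w" "t \<noteq> u" "t \<noteq> w" "u \<noteq> w"
    using assms(1,2) by auto
  note neq' = neq[THEN not_sym]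
  from st show ?thesis
    by (elim disjE conjE) (use neq neq' in simp_all; use neq neq' tu uw in simp)+
qed

text \<open>A 4-cycle traversed as \<open>a, b, c, d\<close> is stored as \<open>((a, b), (c, d))\<close>, so that its first
  edge is the \<open>fst\<close> component.\<close>
definition rooted_C4s :: "'a set set \<Rightarrow> (('a \<times> 'a) \<times> ('a \<times> 'a)) set" where
  "rooted_C4s E = {((a, b), (c, d)). distinct [a, b, c, d] \<and>
     {a, b} \<in> E \<and> {b, c} \<in> E \<and> {c, d} \<in> E \<and> {d, a} \<in> E}"

definition C4_of :: "('a \<times> 'a) \<times> ('a \<times> 'a) \<Rightarrow> 'a set \<times> 'a set set" where
  "C4_of = (\<lambda>((a, b), (c, d)). ({a, b, c, d}, {{a, b}, {b, c}, {c, d}, {d, a}}))"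

definition reverse_C4 :: "('a \<times> 'a) \<times> ('a \<times> 'a) \<Rightarrow> ('a \<times> 'a) \<times> ('a \<times> 'a)" where
  "reverse_C4 = (\<lambda>((a, b), (c, d)). ((b, a), (d, c)))"

lemma simple_graph_edgeD:
  assumes "simple_graph V E" "{x, y} \<in> E"
  shows "x \<in> V" "y \<in> V" "x \<noteq> y"
  using assms unfolding simple_graph_def by (auto simp: doubleton_eq_iff)

lemma finite_rooted_C4s:
  assumes "simple_graph V E"
  shows "finite (rooted_C4s E)"
proof (rule finite_subset)
  show "rooted_C4s E \<subseteq> (V \<times> V) \<times> (V \<times> V)"
    using simple_graph_edgeD[OF assms] unfolding rooted_C4s_def by auto
  show "finite ((V \<times> V) \<times> (V \<times> V))"
    using assms unfolding simple_graph_def by simp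
qed

lemma C4_of_rooted_C4s:
  assumes "simple_graph V E"
  shows "C4_of ` rooted_C4s E = C4_subgraphs V E"
proof (intro equalityI subsetI)
  fix y
  assume "y \<in> C4_of ` rooted_C4s E"
  then obtain a b c d where "distinct [a, b, c, d]"
    and edges: "{a, b} \<in> E" "{b, c} \<in> E" "{c, d} \<in> E" "{d, a} \<in> E"
    and y: "y = ({a, b, c, d}, {{a, b}, {b, c}, {c, d}, {d, a}})"
    unfolding rooted_C4s_def C4_of_def by auto
  moreover have "{a, b, c, d} \<subseteq> V"
    using simple_graph_edgeD[OF assms edges(1)] simple_graph_edgeD[OF assms edges(3)] by simp
  ultimately show "y \<in> C4_subgraphs V E"
    unfolding C4_subgraphs_def by blast
next
  fix y
  assume "y \<in> C4_subgraphs V E"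
  then obtain a b c d where "distinct [a, b, c, d]" "{{a, b}, {b, c}, {c, d}, {d, a}} \<subseteq> E"
    and y: "y = C4_of ((a, b), (c, d))"
    unfolding C4_subgraphs_def C4_of_def by auto
  then have "((a, b), (c, d)) \<in> rooted_C4s E"
    unfolding rooted_C4s_def by simp
  then show "y \<in> C4_of ` rooted_C4s E"
    using y by blast
qed

lemma card_C4_of_fibre:
  assumes "y \<in> C4_subgraphs V E"
  shows "card {x \<in> rooted_C4s E. C4_of x = y} = 8"
proof -
  obtain a b c d where abcd: "distinct [a, b, c, d]" "{{a, b}, {b, c}, {c, d}, {d, a}} \<subseteq> E"
    and y: "y = ({a, b, c, d}, {{a, b}, {b, c}, {c, d}, {d, a}})"
    using assms unfolding C4_subgraphs_def by auto
  let ?symmetries = "{((a, b), (c, d)), ((b, c), (d, a)), ((c, d), (a, b)), ((d, a), (b, c)),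
    ((a, d), (c, b)), ((d, c), (b, a)), ((c, b), (a, d)), ((b, a), (d, c))}"
  have "{x \<in> rooted_C4s E. C4_of x = y} = ?symmetries"
  proof
    show "{x \<in> rooted_C4s E. C4_of x = y} \<subseteq> ?symmetries"
    proof
      fix x
      assume "x \<in> {x \<in> rooted_C4s E. C4_of x = y}"
      then obtain s t u w where "x = ((s, t), (u, w))" "distinct [s, t, u, w]"
        "{{s, t}, {t, u}, {u, w}, {w, s}} = {{a, b}, {b, c}, {c, d}, {d, a}}"
        unfolding rooted_C4s_def C4_of_def y by auto
      then show "x \<in> ?symmetries"
        using C4_edges_determine_cycle_up_to_symmetry[OF abcd(1)] by simp
    qed
  next
    show "?symmetries \<subseteq> {x \<in> rooted_C4s E. C4_of x = y}"
      using abcd unfolding rooted_C4s_def C4_of_def y by (simp add: insert_commute) blast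
  qed
  moreover have "card ?symmetries = 8"
    using abcd(1) by simp
  ultimately show ?thesis
    by simp
qed

lemma card_rooted_C4s:
  assumes "simple_graph V E"
  shows "card (rooted_C4s E) = 8 * n_C4 V E"
  unfolding n_C4_def C4_of_rooted_C4s[OF assms, symmetric]
  by (rule card_eq_mult_card_image_if_uniform_fibres[OF finite_rooted_C4s[OF assms]])
    (simp add: card_C4_of_fibre C4_of_rooted_C4s[OF assms])

lemma orientation_unique:
  assumes "bij_betw (\<lambda>(s, t). {s, t}) D E" "{a, b} \<in> E" "a \<noteq> b"
  shows "(b, a) \<in> D \<longleftrightarrow> (a, b) \<notin> D"
proof -
  obtain x y where "(x, y) \<in> D" "{x, y} = {a, b}"
    using bij_betw_imp_surj_on[OF assms(1)] assms(2) by force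
  then have "(a, b) \<in> D \<or> (b, a) \<in> D"
    by (auto simp: doubleton_eq_iff)
  moreover have "(a, b) \<notin> D \<or> (b, a) \<notin> D"
    using inj_onD[OF bij_betw_imp_inj_on[OF assms(1)], of "(a, b)" "(b, a)"] assms(3)
    by (auto simp: insert_commute)
  ultimately show ?thesis
    by blast
qed

lemma orientation_edge:
  assumes "bij_betw (\<lambda>(s, t). {s, t}) D E" "(s, t) \<in> D"
  shows "{s, t} \<in> E"
  using bij_betw_imp_surj_on[OF assms(1)] assms(2) by force

lemma reverse_C4_in_rooted_C4s:
  assumes "x \<in> rooted_C4s E"
  shows "reverse_C4 x \<in> rooted_C4s E"
  using assms unfolding rooted_C4s_def reverse_C4_def by (auto simp: insert_commute)

lemma card_rooted_C4s_oriented: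
  assumes "simple_graph V E" "bij_betw (\<lambda>(s, t). {s, t}) D E"
  shows "card (rooted_C4s E) = 2 * card {x \<in> rooted_C4s E. fst x \<in> D}"
proof (rule card_eq_twice_card_if_involution_flips)
  show "finite (rooted_C4s E)"
    using assms(1) by (rule finite_rooted_C4s)
  fix x
  assume x: "x \<in> rooted_C4s E"
  then show "reverse_C4 x \<in> rooted_C4s E"
    by (rule reverse_C4_in_rooted_C4s)
  show "reverse_C4 (reverse_C4 x) = x"
    unfolding reverse_C4_def by (simp split: prod.splits)
  obtain a b c d where "x = ((a, b), (c, d))" "{a, b} \<in> E" "a \<noteq> b"
    using x unfolding rooted_C4s_def by auto
  then show "fst (reverse_C4 x) \<in> D \<longleftrightarrow> fst x \<notin> D"
    using orientation_unique[OF assms(2)] unfolding reverse_C4_def by simp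
qed

lemma rooted_C4s_from_edge:
  assumes "simple_graph V E" "{s, t} \<in> E"
  shows "{w. ((s, t), w) \<in> rooted_C4s E} =
    (SIGMA u:nbhd V E t - {s}. common_nbhd V E s u - {t})"
  using simple_graph_edgeD[OF assms(1)] assms(2)
  by (auto simp: rooted_C4s_def nbhd_def common_nbhd_def insert_commute)

lemma finite_common_nbhd:
  assumes "finite V"
  shows "finite (common_nbhd V E s u)"
  using assms unfolding common_nbhd_def nbhd_def by simp

lemma card_rooted_C4s_from_edge:
  assumes "simple_graph V E" "{s, t} \<in> E"
  shows "real (card {w. ((s, t), w) \<in> rooted_C4s E}) =
    (\<Sum>u\<in>nbhd V E t - {s}. real (card (common_nbhd V E s u)) - 1)"
proof -
  have "finite V"
    using assms(1) unfolding simple_graph_def by simp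
  have "real (card (common_nbhd V E s u)) - 1 = real (card (common_nbhd V E s u - {t}))"
    if "u \<in> nbhd V E t" for u
  proof -
    have "t \<in> common_nbhd V E s u"
      using that assms(2) simple_graph_edgeD[OF assms]
      unfolding common_nbhd_def nbhd_def by (simp add: insert_commute)
    then have "card (common_nbhd V E s u) = Suc (card (common_nbhd V E s u - {t}))"
      by (rule card.remove[OF finite_common_nbhd[OF \<open>finite V\<close>]])
    then show ?thesis
      by simp
  qed
  then show ?thesis
    unfolding rooted_C4s_from_edge[OF assms]
    using \<open>finite V\<close> finite_common_nbhd[OF \<open>finite V\<close>]
    by (simp add: card_SigmaI nbhd_def)
qed

theorem proposition11:
  fixes V :: "'a set" and E :: "'a set set" and D :: "('a \<times> 'a) set"
  assumes "simple_graph V E"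
    and "D \<subseteq> V \<times> V"
    and "bij_betw (\<lambda>(s, t). {s, t}) D E"
  shows "real (n_C4 V E) =
    (1/4) * (\<Sum>(s, t)\<in>D. \<Sum>u\<in>nbhd V E t - {s}. (real (card (common_nbhd V E s u)) - 1))"
proof -
  let ?fibre = "\<lambda>p. {w. (p, w) \<in> rooted_C4s E}"
  have "finite D"
    using assms(1,2) unfolding simple_graph_def by (simp add: finite_subset)
  have fibres_finite: "finite (?fibre p)" for p
    by (rule finite_subset[OF _ finite_imageI[OF finite_rooted_C4s[OF assms(1)]]]) force
  have "4 * real (n_C4 V E) = real (card {x \<in> rooted_C4s E. fst x \<in> D})"
    using card_rooted_C4s[OF assms(1)] card_rooted_C4s_oriented[OF assms(1,3)] by simp
  also have "{x \<in> rooted_C4s E. fst x \<in> D} = Sigma D ?fibre"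
    by auto
  also have "real (card (Sigma D ?fibre)) = (\<Sum>p\<in>D. real (card (?fibre p)))"
    using \<open>finite D\<close> fibres_finite by (simp add: card_SigmaI)
  also have "\<dots> = (\<Sum>(s, t)\<in>D. \<Sum>u\<in>nbhd V E t - {s}. (real (card (common_nbhd V E s u)) - 1))"
    using card_rooted_C4s_from_edge[OF assms(1) orientation_edge[OF assms(3)]]
    by (intro sum.cong) auto
  finally show ?thesis
    by simp
qed

end
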